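(* For every $p\in k(x)$ there exists a circuit $c_p\in\mathsf{ACirc}[0,1]$ with $[\![c_p]\!]=\{(\bullet,p)\}$.
   Context: Fix a field $k$; $k(x)$ is the field of fractions of polynomials in $x$ over $k$. Circuits: terms built from generators with sorts $(n,m)$: copier $\Delta:(1,2)$, discard $!:(1,0)$, amplifier $\mathsf{s}_r:(1,1)$ ($r\in k$), register $\mathsf{x}:(1,1)$, adder $+:(2,1)$, zero $0:(0,1)$, one $\mathbf{1}:(0,1)$; mirror images $\Delta^{op}:(2,1)$, $!^{op}:(0,1)$, $\mathsf{s}_r^{op}$, $\mathsf{x}^{op}:(1,1)$, $+^{op}:(1,2)$, $0^{op}:(1,0)$, $\mathbf{1}^{op}:(1,0)$; $\mathrm{id}_0:(0,0),\mathrm{id}_1:(1,1),\mathrm{sw}:(2,2)$; closed under sequential composition $;$ and parallel composition $\oplus$. $\mathsf{ACirc}[n,m]$ is the set of circuits of sort $(n,m)$. Denotation: $[\![\Delta]\!]=\{(p,(p,p))\}$, $[\![!]\!]=\{(p,\bullet)\}$, $[\![+]\!]=\{((p,q),p+q)\}$, $[\![0]\!]=\{(\bullet,0)\}$, $[\![\mathbf 1]\!]=\{(\bullet,1)\}$, $[\![\mathsf s_r]\!]=\{(p,rp)\}$, $[\![\mathsf x]\!]=\{(p,px)\}$ ($p,q\in k(x)$, $\bullet$ the unique element of $k(x)^0$); mirrored generators denote converse relations; $\mathrm{id}_1,\mathrm{sw},\mathrm{id}_0$ denote identity, swap, $\{(\bullet,\bullet)\}$; $;$ is relational composition and $\oplus$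 product of relations. *)

theory Defs
  imports "HOL-Computational_Algebra.Polynomial" "HOL-Computational_Algebra.Fraction_Field"
begin

type_synonym 'k ratfun = "'k poly fract"

definition ratfun_const :: "'k::field \<Rightarrow> 'k ratfun" where
  "ratfun_const r = Fract [:r:] 1"

definition ratfun_x :: "'k::field ratfun" where
  "ratfun_x = Fract [:0, 1:] 1"

datatype 'k circ =
    Copy | Discard | Amp 'k | Reg | Add | Zero | One
  | CopyOp | DiscardOp | AmpOp 'k | RegOp | AddOp | ZeroOp | OneOp
  | Id0 | Id1 | Sw
  | Seq "'k circ" "'k circ"
  | Par "'k circ" "'k circ"

inductive circ_sort :: "'k circ \<Rightarrow> nat \<Rightarrow> nat \<Rightarrow> bool" where
  "circ_sort Copy 1 2"
| "circ_sort Discard 1 0"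
| "circ_sort (Amp r) 1 1"
| "circ_sort Reg 1 1"
| "circ_sort Add 2 1"
| "circ_sort Zero 0 1"
| "circ_sort One 0 1"
| "circ_sort CopyOp 2 1"
| "circ_sort DiscardOp 0 1"
| "circ_sort (AmpOp r) 1 1"
| "circ_sort RegOp 1 1"
| "circ_sort AddOp 1 2"
| "circ_sort ZeroOp 1 0"
| "circ_sort OneOp 1 0"
| "circ_sort Id0 0 0"
| "circ_sort Id1 1 1"
| "circ_sort Sw 2 2"
| "circ_sort c n m \<Longrightarrow> circ_sort d m l \<Longrightarrow> circ_sort (Seq c d) n l"
| "circ_sort c n1 m1 \<Longrightarrow> circ_sort d n2 m2 \<Longrightarrow> circ_sort (Par c d) (n1 + n2) (m1 + m2)"

definition ACirc :: "nat \<Rightarrow> nat \<Rightarrow> 'k circ set" where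
  "ACirc n m = {c. circ_sort c n m}"

text \<open>Elements of k(x)^n are lists of length n; the empty list is the unique element of k(x)^0.\<close>

definition par_rel :: "('a list \<times> 'a list) set \<Rightarrow> ('a list \<times> 'a list) set \<Rightarrow> ('a list \<times> 'a list) set" where
  "par_rel R S = {(a @ c, b @ d) | a b c d. (a, b) \<in> R \<and> (c, d) \<in> S}"

fun sem_gen :: "'k::field circ \<Rightarrow> ('k ratfun list \<times> 'k ratfun list) set" where
  "sem_gen Copy = {([p], [p, p]) | p. True}"
| "sem_gen Discard = {([p], []) | p. True}"
| "sem_gen (Amp r) = {([p], [ratfun_const r * p]) | p. True}"
| "sem_gen Reg = {([p], [p * ratfun_x]) | p. True}"
| "sem_gen Add = {([p, q], [p + q]) | p q. True}"
| "sem_gen Zero = {([], [0])}"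
| "sem_gen One = {([], [1])}"
| "sem_gen _ = {}"

fun sem :: "'k::field circ \<Rightarrow> ('k ratfun list \<times> 'k ratfun list) set" where
  "sem CopyOp = converse (sem_gen Copy)"
| "sem DiscardOp = converse (sem_gen Discard)"
| "sem (AmpOp r) = converse (sem_gen (Amp r))"
| "sem RegOp = converse (sem_gen Reg)"
| "sem AddOp = converse (sem_gen Add)"
| "sem ZeroOp = converse (sem_gen Zero)"
| "sem OneOp = converse (sem_gen One)"
| "sem Id0 = {([], [])}"
| "sem Id1 = {([p], [p]) | p. True}"
| "sem Sw = {([p, q], [q, p]) | p q. True}"
| "sem (Seq c d) = sem c O sem d"
| "sem (Par c d) = par_rel (sem c) (sem d)"
| "sem c = sem_gen c"

end

theory Submission
  imports Defs
begin

text \<open>Write p = a / b with polynomials a and b, b nonzero. Horner's scheme gives, for every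
  polynomial q, a circuit of sort (1, 1) denoting multiplication by q. Mirroring a circuit
  denotes the converse relation, and the converse of multiplication by b is multiplication
  by 1 / b. Hence feeding the constant 1 through the circuit for a and then through the
  mirror image of the circuit for b outputs exactly a / b.\<close>

definition mult_rel :: "'a::times \<Rightarrow> ('a list \<times> 'a list) set" where
  "mult_rel q = {([r], [q * r]) | r. True}"

lemma mult_rel_relcomp [simp]:
  "mult_rel p O mult_rel q = mult_rel (q * (p :: 'a::semigroup_mult))"
  by (auto simp: mult_rel_def mult.assoc)

lemma converse_mult_rel:
  fixes q :: "'a::field"
  assumes "q \<noteq> 0"
  shows "converse (mult_rel q) = mult_rel (inverse q)"
  using assms by (force simp: mult_rel_def field_simps)

lemma par_rel_appendI: "(a, b) \<in> R \<Longrightarrow> (c, d) \<in> S \<Longrightarrow> (a @ c, b @ d) \<in> par_rel R S"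
  unfolding par_rel_def by blast

lemma par_rel_mult_rel:
  "par_rel (mult_rel p) (mult_rel q) = {([r, s], [p * r, q * s]) | r s. True}"
proof (intro equalityI subsetI)
  fix z
  assume "z \<in> {([r, s], [p * r, q * s]) | r s. True}"
  then obtain r s where z: "z = ([r] @ [s], [p * r] @ [q * s])"
    by auto
  have "([r], [p * r]) \<in> mult_rel p" and "([s], [q * s]) \<in> mult_rel q"
    by (auto simp: mult_rel_def)
  then show "z \<in> par_rel (mult_rel p) (mult_rel q)"
    unfolding z by (rule par_rel_appendI)
qed (auto simp: par_rel_def mult_rel_def)

lemma converse_par_rel: "converse (par_rel R S) = par_rel (converse R) (converse S)"
  by (auto simp: par_rel_def)

lemma sem_gen_Amp: "sem_gen (Amp r) = mult_rel (ratfun_const r)"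
  by (simp add: mult_rel_def)

lemma sem_gen_Reg: "sem_gen Reg = mult_rel ratfun_x"
  by (auto simp: mult_rel_def mult.commute)

lemma sem_Copy_Par_Add:
  assumes "sem c = mult_rel p" and "sem d = mult_rel q"
  shows "sem (Seq Copy (Seq (Par c d) Add)) = mult_rel (p + q)"
proof (intro equalityI subsetI)
  fix z
  assume "z \<in> sem (Seq Copy (Seq (Par c d) Add))"
  then obtain r where "z = ([r], [p * r + q * r])"
    by (auto simp: assms par_rel_mult_rel)
  then show "z \<in> mult_rel (p + q)"
    by (simp add: mult_rel_def distrib_right)
next
  fix z
  assume "z \<in> mult_rel (p + q)"
  then obtain r where z: "z = ([r], [(p + q) * r])"
    by (auto simp: mult_rel_def)
  have "([r], [r, r]) \<in> sem Copy"
    by simp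
  moreover have "([r, r], [p * r, q * r]) \<in> sem (Par c d)"
    by (simp add: assms par_rel_mult_rel)
  moreover have "([p * r, q * r], [(p + q) * r]) \<in> sem Add"
    by (simp add: distrib_right)
  ultimately show "z \<in> sem (Seq Copy (Seq (Par c d) Add))"
    unfolding z by auto
qed

lemma Fract_pCons:
  "Fract (pCons a q) 1 = ratfun_const a + Fract q 1 * (ratfun_x :: 'k::field ratfun)"
proof -
  have "pCons a q = [:a:] + q * [:0, 1:]"
    by (simp add: algebra_simps)
  then show ?thesis
    by (simp add: ratfun_const_def ratfun_x_def)
qed

lemmas circ_sort_Seq = circ_sort.intros(18)
lemmas circ_sort_Par = circ_sort.intros(19)

fun horner_circ :: "'k list \<Rightarrow> 'k circ" where
  "horner_circ [] = Seq Discard Zero"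
| "horner_circ (a # as) = Seq Copy (Seq (Par (Amp a) (Seq Reg (horner_circ as))) Add)"

lemma circ_sort_horner_circ: "circ_sort (horner_circ cs) 1 1"
proof (induction cs)
  case Nil
  show ?case
    unfolding horner_circ.simps by (blast intro: circ_sort.intros)
next
  case (Cons a as)
  have "circ_sort (Par (Amp a) (Seq Reg (horner_circ as))) 2 2"
    using circ_sort_Par[OF circ_sort.intros(3) circ_sort_Seq[OF circ_sort.intros(4) Cons.IH]]
    by (simp add: numeral_2_eq_2)
  then show ?case
    unfolding horner_circ.simps by (blast intro: circ_sort.intros)
qed

lemma sem_horner_circ: "sem (horner_circ cs) = mult_rel (Fract (Poly cs) 1)"
proof (induction cs)
  case Nil
  show ?case
    by (auto simp: mult_rel_def Zero_fract_def[symmetric])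
next
  case (Cons a as)
  have "sem (Amp a) = mult_rel (ratfun_const a)"
    by (simp only: sem.simps sem_gen_Amp)
  moreover have "sem (Seq Reg (horner_circ as)) = mult_rel (Fract (Poly as) 1 * ratfun_x)"
    by (simp only: sem.simps sem_gen_Reg Cons.IH mult_rel_relcomp)
  ultimately show ?case
    unfolding horner_circ.simps Poly.simps Fract_pCons by (rule sem_Copy_Par_Add)
qed

fun circ_mirror :: "'k circ \<Rightarrow> 'k circ" where
  "circ_mirror Copy = CopyOp"
| "circ_mirror Discard = DiscardOp"
| "circ_mirror (Amp r) = AmpOp r"
| "circ_mirror Reg = RegOp"
| "circ_mirror Add = AddOp"
| "circ_mirror Zero = ZeroOp"
| "circ_mirror One = OneOp"
| "circ_mirror CopyOp = Copy"
| "circ_mirror DiscardOp = Discard"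
| "circ_mirror (AmpOp r) = Amp r"
| "circ_mirror RegOp = Reg"
| "circ_mirror AddOp = Add"
| "circ_mirror ZeroOp = Zero"
| "circ_mirror OneOp = One"
| "circ_mirror Id0 = Id0"
| "circ_mirror Id1 = Id1"
| "circ_mirror Sw = Sw"
| "circ_mirror (Seq c d) = Seq (circ_mirror d) (circ_mirror c)"
| "circ_mirror (Par c d) = Par (circ_mirror c) (circ_mirror d)"

lemma circ_sort_mirror: "circ_sort c n m \<Longrightarrow> circ_sort (circ_mirror c) m n"
  by (induction rule: circ_sort.induct)
    (simp only: circ_mirror.simps; blast intro: circ_sort.intros)+

lemma sem_mirror: "sem (circ_mirror c) = converse (sem c)"
  by (induction c) (auto simp: converse_relcomp converse_par_rel)

theorem lemma1:
  fixes p :: "'k::field ratfun"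
  shows "\<exists>c \<in> (ACirc 0 1 :: 'k circ set). sem c = {([], [p])}"
proof (cases p)
  case (Fract a b)
  define c :: "'k circ" where
    "c = Seq One (Seq (horner_circ (coeffs a)) (circ_mirror (horner_circ (coeffs b))))"
  have "c \<in> ACirc 0 1"
    unfolding c_def ACirc_def
    by (blast intro: circ_sort.intros circ_sort_horner_circ circ_sort_mirror)
  moreover have "Fract b 1 \<noteq> (0 :: 'k ratfun)"
    using \<open>b \<noteq> 0\<close> by (simp add: Zero_fract_def eq_fract)
  then have "sem c = {([], [1])} O mult_rel (Fract a 1 / Fract b 1)"
    by (simp add: c_def sem_horner_circ sem_mirror converse_mult_rel divide_inverse mult.commute)
  then have "sem c = {([], [p])}"
    using Fract \<open>b \<noteq> 0\<close> by (auto simp: mult_rel_def)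
  ultimately show ?thesis
    by blast
qed

end
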